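(* Let $A$ be a nicely essential subring of a ring $S$. Then: (a) If $L,L'$ are left ideals of $A$ with $L\cap L'=0$, then $SL\cap SL'=0$; moreover $\operatorname{udim}(S)=\operatorname{udim}(A)$. Also $\mathcal Z(A)=A\cap\mathcal Z(S)$, and $\mathcal Z(A)$ is a nicely essential left $A$-submodule of $\mathcal Z(S)$ (i.e. for every finite set $E$ of non-zero elements of $\mathcal Z(S)$ there is $a\in A$ with $0\ne ax\in\mathcal Z(A)$ for all $x\in E$). (b) Let $L\subseteq S$ be any non-zero left $A$-submodule. Then the left ideal $A\cap L$ of $A$ is uniform (respectively, essential) in $A$ if and only if the left ideal $SL$ of $S$ is uniform (respectively, essential) in $S$.
   Context: A subring $A$ of a ring $S$ (same identity) is a nicely essential subring if for every finite set $E\subseteq S$ of non-zero elements there exists $a\in A$ with $0\neq ax\in A$ for all $x\in E$. $\operatorname{udim}$ of a ring denotes its left uniform dimension (supremum of cardinals $\mathfrak N$ such that the ring contains a direct sum of $\mathfrak N$ non-zero left ideals; possibly infinite). For a ring $B$, $\mathcal Z(B)$ is the left singular ideal: the set of $x\in B$ whose left annihilator $\{b\in B: bx=0\}$ contains an essential left ideal of $B$. For a subset $L\subseteq S$, $SL$ is the additive subgroup generated by products $sl$. *)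

theory Defs
  imports Main
begin

text \<open>Everything lives inside one ambient (not necessarily commutative) ring S,
  represented by the type 'a :: ring_1; subrings are subsets of that type.\<close>

definition is_subring :: "'a::ring_1 set \<Rightarrow> bool" where
  "is_subring A \<longleftrightarrow> 1 \<in> A \<and> 0 \<in> A \<and> (\<forall>x\<in>A. \<forall>y\<in>A. x + y \<in> A \<and> x * y \<in> A) \<and> (\<forall>x\<in>A. - x \<in> A)"

definition nicely_essential_subring :: "'a::ring_1 set \<Rightarrow> bool" where
  "nicely_essential_subring A \<longleftrightarrow> is_subring A \<and>
     (\<forall>E. finite E \<and> 0 \<notin> E \<longrightarrow> (\<exists>a\<in>A. \<forall>x\<in>E. a * x \<noteq> 0 \<and> a * x \<in> A))"

definition left_submodule :: "'a::ring_1 set \<Rightarrow> 'a set \<Rightarrow> bool" where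
  "left_submodule B L \<longleftrightarrow> 0 \<in> L \<and> (\<forall>x\<in>L. \<forall>y\<in>L. x + y \<in> L) \<and> (\<forall>x\<in>L. - x \<in> L)
     \<and> (\<forall>b\<in>B. \<forall>x\<in>L. b * x \<in> L)"

text \<open>Left ideal of the ring B (B a subring; B = UNIV for S itself).\<close>
definition left_ideal :: "'a::ring_1 set \<Rightarrow> 'a set \<Rightarrow> bool" where
  "left_ideal B L \<longleftrightarrow> L \<subseteq> B \<and> left_submodule B L"

definition essential_in :: "'a::ring_1 set \<Rightarrow> 'a set \<Rightarrow> bool" where
  "essential_in B L \<longleftrightarrow> left_ideal B L \<and>
     (\<forall>K. left_ideal B K \<and> K \<noteq> {0} \<longrightarrow> L \<inter> K \<noteq> {0})"

definition uniform_in :: "'a::ring_1 set \<Rightarrow> 'a set \<Rightarrow> bool" where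
  "uniform_in B L \<longleftrightarrow> left_ideal B L \<and> L \<noteq> {0} \<and>
     (\<forall>K K'. left_ideal B K \<and> left_ideal B K' \<and> K \<subseteq> L \<and> K' \<subseteq> L \<and> K \<noteq> {0} \<and> K' \<noteq> {0}
        \<longrightarrow> K \<inter> K' \<noteq> {0})"

definition sing :: "'a::ring_1 set \<Rightarrow> 'a set" where
  "sing B = {x \<in> B. \<exists>E. essential_in B E \<and> (\<forall>b\<in>E. b * x = 0)}"

inductive_set SL :: "'a::ring_1 set \<Rightarrow> 'a set" for L where
  gen: "l \<in> L \<Longrightarrow> s * l \<in> SL L"
| zero: "0 \<in> SL L"
| add: "x \<in> SL L \<Longrightarrow> y \<in> SL L \<Longrightarrow> x + y \<in> SL L"
| neg: "x \<in> SL L \<Longrightarrow> - x \<in> SL L"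

definition indep_ideals :: "'a::ring_1 set \<Rightarrow> 'a set set \<Rightarrow> bool" where
  "indep_ideals B F \<longleftrightarrow> (\<forall>L\<in>F. left_ideal B L \<and> L \<noteq> {0}) \<and>
     (\<forall>G x. finite G \<and> G \<subseteq> F \<and> (\<forall>L\<in>G. x L \<in> L) \<and> (\<Sum>L\<in>G. x L) = 0 \<longrightarrow> (\<forall>L\<in>G. x L = 0))"

text \<open>udim B is bounded above by the cardinal of K: every direct sum of non-zero left
  ideals of B has at most |K| summands.  Since such families have cardinality at most
  |Pow UNIV|, sets K :: 'a set set realise every relevant cardinal, so
  "udim B1 = udim B2" (equality of suprema of cardinals) is expressed as equality of
  the classes of upper bounds.\<close>
definition udim_le :: "'a::ring_1 set \<Rightarrow> 'a set set \<Rightarrow> bool" where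
  "udim_le B K \<longleftrightarrow> (\<forall>F. indep_ideals B F \<longrightarrow> (\<exists>f. inj_on f F \<and> f ` F \<subseteq> K))"

end

theory Submission
  imports Defs
begin

text \<open>Every y \<in> SL L is a finite sum of products s * l with l \<in> L, so every a \<in> A with a * s \<in> A
  for these finitely many s satisfies a * y \<in> L.  A nicely essential subring supplies such an a for
  finitely many elements at once, without annihilating any of finitely many prescribed non-zero
  elements.  Hence every non-zero element of SL L, or of a left ideal M of S, has a non-zero left
  multiple in A \<inter> L, or in A \<inter> M, and so non-zero intersections and direct sums transfer between
  left ideals L of A and SL L, and between left ideals M of S and A \<inter> M.\<close>

lemma nicely_essential_subring_is_subring: "nicely_essential_subring A \<Longrightarrow> is_subring A"
  by (simp add: nicely_essential_subring_def)

lemma nicely_essential_subring_multiplier: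
  assumes ne: "nicely_essential_subring A" and fin: "finite E"
  shows "\<exists>a\<in>A. \<forall>x\<in>E. a * x \<in> A \<and> (x \<noteq> 0 \<longrightarrow> a * x \<noteq> 0)"
proof -
  obtain a where a: "a \<in> A" "\<forall>x\<in>E - {0}. a * x \<noteq> 0 \<and> a * x \<in> A"
    using ne fin unfolding nicely_essential_subring_def by (metis Diff_iff finite_Diff insertI1)
  have "0 \<in> A" using ne unfolding nicely_essential_subring_def is_subring_def by blast
  with a show ?thesis by (metis DiffI mult_zero_right singletonD)
qed

lemma left_submodule_zero: "left_submodule B L \<Longrightarrow> 0 \<in> L"
  by (simp add: left_submodule_def)

lemma left_submodule_mult: "left_submodule B L \<Longrightarrow> b \<in> B \<Longrightarrow> x \<in> L \<Longrightarrow> b * x \<in> L"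
  by (simp add: left_submodule_def)

lemma left_submodule_nonzero_iff: "left_submodule B L \<Longrightarrow> L \<noteq> {0} \<longleftrightarrow> (\<exists>x\<in>L. x \<noteq> 0)"
  by (auto simp: left_submodule_def)

lemma left_submodule_UNIV_imp_left_submodule: "left_submodule UNIV K \<Longrightarrow> left_submodule A K"
  by (simp add: left_submodule_def)

lemma left_submodule_Int: "left_submodule A K \<Longrightarrow> left_submodule A K' \<Longrightarrow> left_submodule A (K \<inter> K')"
  by (simp add: left_submodule_def)

lemma left_ideal_Int_subring: "is_subring A \<Longrightarrow> left_submodule A K \<Longrightarrow> left_ideal A (A \<inter> K)"
  by (simp add: left_ideal_def left_submodule_def is_subring_def)

lemma essential_inI:
  assumes "left_ideal B L"
    and "\<And>K. left_ideal B K \<Longrightarrow> K \<noteq> {0} \<Longrightarrow> \<exists>x\<in>L \<inter> K. x \<noteq> 0"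
  shows "essential_in B L"
  using assms unfolding essential_in_def by blast

lemma essential_in_Int_nonzero:
  assumes "essential_in B L" "left_ideal B K" "K \<noteq> {0}"
  obtains x where "x \<in> L" "x \<in> K" "x \<noteq> 0"
proof -
  have "0 \<in> L \<inter> K"
    using assms by (simp add: essential_in_def left_ideal_def left_submodule_def)
  then show ?thesis using assms that unfolding essential_in_def by blast
qed

lemma Int_subring_nonzero:
  assumes ne: "nicely_essential_subring A" and K: "left_submodule A K" "K \<noteq> {0}"
  shows "A \<inter> K \<noteq> {0}"
proof -
  obtain x where x: "x \<in> K" "x \<noteq> 0" using K left_submodule_nonzero_iff by blast
  obtain a where "a \<in> A" "a * x \<in> A" "a * x \<noteq> 0"
    using nicely_essential_subring_multiplier[OF ne, of "{x}"] x by auto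
  moreover have "a * x \<in> K" using K x \<open>a \<in> A\<close> by (simp add: left_submodule_mult)
  ultimately show ?thesis by auto
qed

subsection \<open>The left ideal SL\<close>

lemma left_ideal_SL: "left_ideal UNIV (SL L)"
proof -
  have "b * x \<in> SL L" if "x \<in> SL L" for b x
    using that
  proof induction
    case (gen l s)
    then show ?case using SL.gen[of l L "b * s"] by (simp add: mult.assoc)
  qed (auto simp: distrib_left intro: SL.intros)
  then show ?thesis unfolding left_ideal_def left_submodule_def by (auto intro: SL.intros)
qed

lemma subset_SL: "L \<subseteq> SL L"
  using SL.gen[of _ L 1] by auto

lemma SL_mono:
  assumes "L \<subseteq> L'"
  shows "SL L \<subseteq> SL L'"
proof
  fix x assume "x \<in> SL L"
  then show "x \<in> SL L'" by induction (use assms in \<open>auto intro: SL.intros\<close>)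
qed

lemma SL_nonzero: "left_submodule B L \<Longrightarrow> L \<noteq> {0} \<Longrightarrow> SL L \<noteq> {0}"
  using subset_SL[of L] left_submodule_nonzero_iff by blast

lemma SL_finite_denominators:
  assumes L: "left_submodule A L" and y: "y \<in> SL L"
  shows "\<exists>F. finite F \<and> (\<forall>a\<in>A. (\<forall>s\<in>F. a * s \<in> A) \<longrightarrow> a * y \<in> L)"
  using y
proof induction
  case (gen l s)
  have "a * (s * l) \<in> L" if "a * s \<in> A" for a
    using left_submodule_mult[OF L that gen] by (simp add: mult.assoc)
  then show ?case by (intro exI[of _ "{s}"]) simp
next
  case zero
  show ?case using L by (intro exI[of _ "{}"]) (simp add: left_submodule_zero)
next
  case (add x y)
  then obtain F G where "finite F" "\<forall>a\<in>A. (\<forall>s\<in>F. a * s \<in> A) \<longrightarrow> a * x \<in> L"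
    "finite G" "\<forall>a\<in>A. (\<forall>s\<in>G. a * s \<in> A) \<longrightarrow> a * y \<in> L" by blast
  then show ?case
    using L by (intro exI[of _ "F \<union> G"]) (auto simp: distrib_left left_submodule_def)
next
  case (neg x)
  then show ?case using L by (auto simp: left_submodule_def)
qed

lemma SL_common_multiplier:
  assumes ne: "nicely_essential_subring A" and G: "finite G"
    and y: "\<And>M. M \<in> G \<Longrightarrow> left_submodule A M \<and> y M \<in> SL M" and E: "finite E"
  shows "\<exists>a\<in>A. (\<forall>M\<in>G. a * y M \<in> M) \<and> (\<forall>x\<in>E. a * x \<in> A \<and> (x \<noteq> 0 \<longrightarrow> a * x \<noteq> 0))"
proof -
  have "\<forall>M\<in>G. \<exists>F. finite F \<and> (\<forall>a\<in>A. (\<forall>s\<in>F. a * s \<in> A) \<longrightarrow> a * y M \<in> M)"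
    using SL_finite_denominators y by blast
  then obtain F where F: "\<forall>M\<in>G. finite (F M) \<and> (\<forall>a\<in>A. (\<forall>s\<in>F M. a * s \<in> A) \<longrightarrow> a * y M \<in> M)"
    by (metis bchoice)
  have "finite (E \<union> \<Union>(F ` G))" using G E F by auto
  from nicely_essential_subring_multiplier[OF ne this]
  obtain a where a: "a \<in> A" "\<forall>x\<in>E \<union> \<Union>(F ` G). a * x \<in> A \<and> (x \<noteq> 0 \<longrightarrow> a * x \<noteq> 0)"
    by blast
  then have "\<forall>M\<in>G. a * y M \<in> M" using F by blast
  with a show ?thesis by blast
qed

lemma SL_Int_SL_nonzero_multiplier:
  assumes ne: "nicely_essential_subring A" and "left_submodule A L" "left_submodule A L'"
    and "y \<in> SL L" "y \<in> SL L'" "y \<noteq> 0"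
  obtains a where "a \<in> A" "a * y \<in> A" "a * y \<in> L" "a * y \<in> L'" "a * y \<noteq> 0"
  using SL_common_multiplier[OF ne, of "{L, L'}" "\<lambda>_. y" "{y}"] assms that by auto

lemma SL_nonzero_multiplier:
  assumes ne: "nicely_essential_subring A" and "left_submodule A L" "y \<in> SL L" "y \<noteq> 0"
  obtains a where "a \<in> A" "a * y \<in> A" "a * y \<in> L" "a * y \<noteq> 0"
  using SL_Int_SL_nonzero_multiplier[OF ne assms(2,2,3,3,4)] that by blast

lemma SL_Int_SL_eq_zero:
  assumes ne: "nicely_essential_subring A" and L: "left_ideal A L" "left_ideal A L'"
    and disj: "L \<inter> L' = {0}"
  shows "SL L \<inter> SL L' = {0}"
proof (rule ccontr)
  assume "SL L \<inter> SL L' \<noteq> {0}"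
  then obtain y where "y \<in> SL L" "y \<in> SL L'" "y \<noteq> 0"
    using SL.zero[of L] SL.zero[of L'] by blast
  moreover have "left_submodule A L" "left_submodule A L'" using L by (simp_all add: left_ideal_def)
  ultimately obtain a where "a * y \<in> L" "a * y \<in> L'" "a * y \<noteq> 0"
    using SL_Int_SL_nonzero_multiplier[OF ne] by metis
  with disj show False by blast
qed

subsection \<open>Essential left ideals\<close>

lemma essential_in_UNIV_if_contains_essential:
  fixes A :: "'a::ring_1 set"
  assumes ne: "nicely_essential_subring A" and E: "essential_in A E"
    and M: "left_ideal UNIV M" "E \<subseteq> M"
  shows "essential_in UNIV M"
proof (rule essential_inI[OF M(1)])
  fix K :: "'a set" assume K: "left_ideal UNIV K" "K \<noteq> {0}"
  then have "left_submodule A K" by (simp add: left_ideal_def left_submodule_UNIV_imp_left_submodule)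
  with ne K(2) have "left_ideal A (A \<inter> K)" "A \<inter> K \<noteq> {0}"
    by (simp_all add: left_ideal_Int_subring nicely_essential_subring_is_subring Int_subring_nonzero)
  with E obtain x where "x \<in> E" "x \<in> A \<inter> K" "x \<noteq> 0" by (rule essential_in_Int_nonzero)
  with M(2) show "\<exists>x\<in>M \<inter> K. x \<noteq> 0" by blast
qed

lemma essential_in_Int_subring_if_essential_SL:
  assumes ne: "nicely_essential_subring A" and L: "left_submodule A L"
    and E: "essential_in UNIV (SL L)"
  shows "essential_in A (A \<inter> L)"
proof (rule essential_inI)
  show "left_ideal A (A \<inter> L)"
    using ne L by (simp add: left_ideal_Int_subring nicely_essential_subring_is_subring)
next
  fix K assume K: "left_ideal A K" "K \<noteq> {0}"
  then have Ks: "left_submodule A K" "K \<subseteq> A" by (simp_all add: left_ideal_def)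
  have "SL K \<noteq> {0}" using Ks(1) K(2) by (rule SL_nonzero)
  with E left_ideal_SL obtain y where "y \<in> SL L" "y \<in> SL K" "y \<noteq> 0"
    by (rule essential_in_Int_nonzero)
  with ne L Ks(1) obtain a where "a * y \<in> A" "a * y \<in> L" "a * y \<in> K" "a * y \<noteq> 0"
    by (rule SL_Int_SL_nonzero_multiplier)
  then show "\<exists>x\<in>(A \<inter> L) \<inter> K. x \<noteq> 0" by blast
qed

lemma essential_in_Int_subring_iff_essential_SL:
  assumes ne: "nicely_essential_subring A" and L: "left_submodule A L"
  shows "essential_in A (A \<inter> L) \<longleftrightarrow> essential_in UNIV (SL L)"
  using essential_in_Int_subring_if_essential_SL[OF ne L]
    essential_in_UNIV_if_contains_essential[OF ne _ left_ideal_SL, of "A \<inter> L" L] subset_SL[of L]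
  by blast

lemma SL_left_ideal_UNIV: "left_ideal UNIV M \<Longrightarrow> SL M = M"
proof
  assume M: "left_ideal UNIV M"
  show "SL M \<subseteq> M"
  proof
    fix x assume "x \<in> SL M"
    then show "x \<in> M"
      by induction (use M in \<open>auto simp: left_ideal_def left_submodule_def\<close>)
  qed
qed (rule subset_SL)

subsection \<open>The singular ideal\<close>

lemma left_ideal_UNIV_vimage_mult_right:
  "left_ideal UNIV E \<Longrightarrow> left_ideal UNIV ((\<lambda>s. s * r) -` E)"
  by (auto simp: left_ideal_def left_submodule_def distrib_right mult.assoc)

lemma left_ideal_UNIV_image_mult_right:
  assumes "left_ideal UNIV K"
  shows "left_ideal UNIV ((\<lambda>k. k * r) ` K)"
proof -
  have K: "0 \<in> K" "\<And>x y. x \<in> K \<Longrightarrow> y \<in> K \<Longrightarrow> x + y \<in> K" "\<And>x. x \<in> K \<Longrightarrow> - x \<in> K"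
    "\<And>b x. x \<in> K \<Longrightarrow> b * x \<in> K"
    using assms by (auto simp: left_ideal_def left_submodule_def)
  show ?thesis unfolding left_ideal_def left_submodule_def
  proof (safe intro!: image_eqI)
    show "0 = 0 * r" "0 \<in> K" using K(1) by simp_all
    fix x y assume "x \<in> K" "y \<in> K"
    then show "x * r + y * r = (x + y) * r" "x + y \<in> K" "- (x * r) = (- x) * r" "- x \<in> K"
      using K(2,3) by (simp_all add: distrib_right)
    fix b show "b * (x * r) = (b * x) * r" "b * x \<in> K"
      using K(4) \<open>x \<in> K\<close> by (simp_all add: mult.assoc)
  qed simp
qed

lemma essential_in_UNIV_vimage_mult_right:
  fixes r :: "'a::ring_1"
  assumes E: "essential_in UNIV E"
  shows "essential_in UNIV ((\<lambda>s. s * r) -` E)"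
proof (rule essential_inI)
  show "left_ideal UNIV ((\<lambda>s. s * r) -` E)"
    using E by (simp add: essential_in_def left_ideal_UNIV_vimage_mult_right)
next
  fix K :: "'a set" assume K: "left_ideal UNIV K" "K \<noteq> {0}"
  show "\<exists>x\<in>(\<lambda>s. s * r) -` E \<inter> K. x \<noteq> 0"
  proof (cases "(\<lambda>k. k * r) ` K = {0}")
    case True
    have "0 \<in> E" using E by (simp add: essential_in_def left_ideal_def left_submodule_def)
    with True have "K \<subseteq> (\<lambda>s. s * r) -` E" by auto
    with K show ?thesis by (auto simp: left_ideal_def left_submodule_nonzero_iff)
  next
    case False
    with E left_ideal_UNIV_image_mult_right[OF K(1)]
    obtain x where "x \<in> E" "x \<in> (\<lambda>k. k * r) ` K" "x \<noteq> 0"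
      by (rule essential_in_Int_nonzero)
    then obtain k where "k \<in> K" "k * r \<in> E" "k * r \<noteq> 0" by blast
    then show ?thesis by (intro bexI[of _ k]) auto
  qed
qed

lemma sing_UNIV_mult:
  assumes "x \<in> sing (UNIV :: 'a::ring_1 set)"
  shows "r * x \<in> sing (UNIV :: 'a set)"
proof -
  obtain E where E: "essential_in UNIV E" "\<forall>b\<in>E. b * x = 0"
    using assms unfolding sing_def by blast
  then have "\<forall>b\<in>(\<lambda>s. s * r) -` E. b * (r * x) = 0" by (simp add: mult.assoc[symmetric])
  with essential_in_UNIV_vimage_mult_right[OF E(1)] show ?thesis
    unfolding sing_def by blast
qed

lemma sing_Int_subring:
  fixes A :: "'a::ring_1 set"
  assumes ne: "nicely_essential_subring A"
  shows "sing A = A \<inter> sing UNIV"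
proof (intro equalityI subsetI)
  fix x assume "x \<in> sing A"
  then obtain E where x: "x \<in> A" and E: "essential_in A E" "\<forall>b\<in>E. b * x = 0"
    unfolding sing_def by blast
  have "left_ideal UNIV ((\<lambda>y. y * x) -` {0})"
    by (rule left_ideal_UNIV_vimage_mult_right) (simp add: left_ideal_def left_submodule_def)
  moreover have "E \<subseteq> (\<lambda>y. y * x) -` {0}" using E(2) by auto
  ultimately have "essential_in UNIV ((\<lambda>y. y * x) -` {0})"
    by (rule essential_in_UNIV_if_contains_essential[OF ne E(1)])
  with x show "x \<in> A \<inter> sing UNIV" unfolding sing_def by auto
next
  fix x assume "x \<in> A \<inter> sing UNIV"
  then obtain E where x: "x \<in> A" and E: "essential_in UNIV E" "\<forall>b\<in>E. b * x = 0"
    unfolding sing_def by blast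
  have "left_ideal UNIV E" using E(1) by (simp add: essential_in_def)
  then have "left_submodule A E" "SL E = E"
    by (simp_all add: left_ideal_def left_submodule_UNIV_imp_left_submodule SL_left_ideal_UNIV)
  with essential_in_Int_subring_if_essential_SL[OF ne] E(1) have "essential_in A (A \<inter> E)"
    by simp
  with x E(2) show "x \<in> sing A" unfolding sing_def by blast
qed

lemma sing_Int_subring_multiplier:
  fixes A :: "'a::ring_1 set"
  assumes ne: "nicely_essential_subring A"
    and E: "finite E" "E \<subseteq> sing UNIV" "0 \<notin> E"
  shows "\<exists>a\<in>A. \<forall>x\<in>E. a * x \<noteq> 0 \<and> a * x \<in> sing A"
proof -
  obtain a where a: "a \<in> A" "\<forall>x\<in>E. a * x \<noteq> 0 \<and> a * x \<in> A"
    using ne E unfolding nicely_essential_subring_def by blast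
  moreover have "\<forall>x\<in>E. a * x \<in> sing UNIV" using E(2) sing_UNIV_mult by blast
  ultimately show ?thesis by (auto simp: sing_Int_subring[OF ne])
qed

subsection \<open>Uniform left ideals\<close>

lemma uniform_inI:
  assumes "left_ideal B L" "L \<noteq> {0}"
    and "\<And>K K'. left_ideal B K \<Longrightarrow> left_ideal B K' \<Longrightarrow> K \<subseteq> L \<Longrightarrow> K' \<subseteq> L \<Longrightarrow>
      K \<noteq> {0} \<Longrightarrow> K' \<noteq> {0} \<Longrightarrow> \<exists>x\<in>K \<inter> K'. x \<noteq> 0"
  shows "uniform_in B L"
  using assms unfolding uniform_in_def by blast

lemma uniform_in_Int_nonzero:
  assumes "uniform_in B L" "left_ideal B K" "left_ideal B K'" "K \<subseteq> L" "K' \<subseteq> L"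
    "K \<noteq> {0}" "K' \<noteq> {0}"
  obtains x where "x \<in> K" "x \<in> K'" "x \<noteq> 0"
proof -
  have "0 \<in> K \<inter> K'" using assms(2,3) by (simp add: left_ideal_def left_submodule_def)
  then show ?thesis using assms that unfolding uniform_in_def by blast
qed

lemma Int_subring_Int_nonzero:
  assumes ne: "nicely_essential_subring A" and L: "left_submodule A L"
    and K: "left_ideal UNIV K" "K \<subseteq> SL L" "K \<noteq> {0}"
  shows "A \<inter> (L \<inter> K) \<noteq> {0}"
proof -
  have Ks: "left_submodule UNIV K" using K(1) by (simp add: left_ideal_def)
  then obtain y where "y \<in> K" "y \<noteq> 0" using K(3) left_submodule_nonzero_iff by blast
  moreover have "y \<in> SL L" using K(2) \<open>y \<in> K\<close> by blast
  ultimately obtain a where "a \<in> A" "a * y \<in> A" "a * y \<in> L" "a * y \<noteq> 0"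
    using SL_nonzero_multiplier[OF ne L] by blast
  moreover have "a * y \<in> K" using Ks \<open>y \<in> K\<close> by (simp add: left_submodule_mult)
  ultimately show ?thesis by blast
qed

lemma uniform_in_SL_if_uniform_Int_subring:
  fixes A :: "'a::ring_1 set"
  assumes ne: "nicely_essential_subring A" and L: "left_submodule A L" "L \<noteq> {0}"
    and U: "uniform_in A (A \<inter> L)"
  shows "uniform_in UNIV (SL L)"
proof (rule uniform_inI[OF left_ideal_SL SL_nonzero[OF L]])
  fix K K' :: "'a set"
  assume K: "left_ideal UNIV K" "left_ideal UNIV K'" "K \<subseteq> SL L" "K' \<subseteq> SL L"
    "K \<noteq> {0}" "K' \<noteq> {0}"
  have ideal: "left_ideal A (A \<inter> (L \<inter> M))" if "left_ideal UNIV M" for M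
  proof -
    have "left_submodule A M" using that by (simp add: left_ideal_def left_submodule_UNIV_imp_left_submodule)
    with ne L(1) show ?thesis
      by (simp add: left_ideal_Int_subring left_submodule_Int nicely_essential_subring_is_subring)
  qed
  have "A \<inter> (L \<inter> K) \<subseteq> A \<inter> L" "A \<inter> (L \<inter> K') \<subseteq> A \<inter> L" by auto
  then obtain x where "x \<in> A \<inter> (L \<inter> K)" "x \<in> A \<inter> (L \<inter> K')" "x \<noteq> 0"
    using uniform_in_Int_nonzero[OF U ideal[OF K(1)] ideal[OF K(2)]]
      Int_subring_Int_nonzero[OF ne L(1) K(1) K(3) K(5)]
      Int_subring_Int_nonzero[OF ne L(1) K(2) K(4) K(6)]
    by blast
  then show "\<exists>x\<in>K \<inter> K'. x \<noteq> 0" by blast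
qed

lemma uniform_in_Int_subring_if_uniform_SL:
  assumes ne: "nicely_essential_subring A" and L: "left_submodule A L" "L \<noteq> {0}"
    and U: "uniform_in UNIV (SL L)"
  shows "uniform_in A (A \<inter> L)"
proof (rule uniform_inI)
  show "left_ideal A (A \<inter> L)"
    using ne L(1) by (simp add: left_ideal_Int_subring nicely_essential_subring_is_subring)
  show "A \<inter> L \<noteq> {0}" using ne L by (rule Int_subring_nonzero)
next
  fix K K' assume K: "left_ideal A K" "left_ideal A K'" "K \<subseteq> A \<inter> L" "K' \<subseteq> A \<inter> L"
    "K \<noteq> {0}" "K' \<noteq> {0}"
  show "\<exists>x\<in>K \<inter> K'. x \<noteq> 0"
  proof (rule ccontr)
    assume "\<not> (\<exists>x\<in>K \<inter> K'. x \<noteq> 0)"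
    then have "K \<inter> K' = {0}"
      using K(1,2) by (auto simp: left_ideal_def left_submodule_def)
    with ne K(1,2) have disj: "SL K \<inter> SL K' = {0}" by (rule SL_Int_SL_eq_zero)
    have "SL K \<subseteq> SL L" "SL K' \<subseteq> SL L" using K(3,4) SL_mono by blast+
    moreover have "SL K \<noteq> {0}" "SL K' \<noteq> {0}"
      using K SL_nonzero by (auto simp: left_ideal_def)
    ultimately obtain y where "y \<in> SL K" "y \<in> SL K'" "y \<noteq> 0"
      by (rule uniform_in_Int_nonzero[OF U left_ideal_SL left_ideal_SL])
    with disj show False by blast
  qed
qed

lemma uniform_in_Int_subring_iff_uniform_SL:
  assumes ne: "nicely_essential_subring A" and L: "left_submodule A L" "L \<noteq> {0}"
  shows "uniform_in A (A \<inter> L) \<longleftrightarrow> uniform_in UNIV (SL L)"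
  using uniform_in_Int_subring_if_uniform_SL[OF ne L] uniform_in_SL_if_uniform_Int_subring[OF ne L]
  by blast

subsection \<open>Uniform dimension\<close>

lemma indep_idealsD:
  assumes "indep_ideals B F" "finite G" "G \<subseteq> F" "\<forall>L\<in>G. x L \<in> L" "sum x G = 0"
  shows "\<forall>L\<in>G. x L = 0"
  using assms unfolding indep_ideals_def by blast

lemma indep_ideals_pair_Int:
  assumes ind: "indep_ideals B F" and L: "L \<in> F" "L' \<in> F" "L \<noteq> L'" and v: "v \<in> L" "v \<in> L'"
  shows "v = 0"
proof -
  have "- v \<in> L'" using ind L(2) v(2) by (simp add: indep_ideals_def left_ideal_def left_submodule_def)
  then have mem: "\<forall>M\<in>{L, L'}. (if M = L then v else - v) \<in> M" using v by auto
  have sum: "(\<Sum>M\<in>{L, L'}. if M = L then v else - v) = 0" using L(3) by simp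
  have "{L, L'} \<subseteq> F" using L by auto
  from indep_idealsD[OF ind _ this mem sum] show ?thesis by simp
qed

lemma indep_ideals_image:
  assumes inj: "inj_on h F" and nz: "\<forall>L\<in>F. left_ideal B (h L) \<and> h L \<noteq> {0}"
    and indep: "\<And>G x. finite G \<Longrightarrow> G \<subseteq> F \<Longrightarrow> \<forall>L\<in>G. x L \<in> h L \<Longrightarrow> sum x G = 0 \<Longrightarrow>
      \<forall>L\<in>G. x L = 0"
  shows "indep_ideals B (h ` F)"
  unfolding indep_ideals_def
proof (intro conjI allI impI)
  show "\<forall>M\<in>h ` F. left_ideal B M \<and> M \<noteq> {0}" using nz by blast
next
  fix G x assume G: "finite G \<and> G \<subseteq> h ` F \<and> (\<forall>M\<in>G. x M \<in> M) \<and> sum x G = 0"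
  define G' where "G' = F \<inter> h -` G"
  have img: "h ` G' = G" using G by (auto simp: G'_def)
  have inj': "inj_on h G'" using inj by (rule inj_on_subset) (simp add: G'_def)
  have "finite G'" using G img finite_image_iff[OF inj'] by simp
  moreover have "sum (x \<circ> h) G' = 0" using G img inj' by (metis sum.reindex)
  ultimately have "\<forall>L\<in>G'. x (h L) = 0" using indep[of G' "x \<circ> h"] G img by (auto simp: G'_def)
  then show "\<forall>M\<in>G. x M = 0" using img by auto
qed

lemma indep_ideals_SL_image:
  assumes ne: "nicely_essential_subring A" and ind: "indep_ideals A F"
  shows "inj_on SL F \<and> indep_ideals UNIV (SL ` F)"
proof -
  have LF: "left_submodule A L" "L \<noteq> {0}" if "L \<in> F" for L
    using ind that by (simp_all add: indep_ideals_def left_ideal_def)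
  have inj: "inj_on SL F"
  proof (rule inj_onI, rule ccontr)
    fix L L' assume L: "L \<in> F" "L' \<in> F" "SL L = SL L'" "L \<noteq> L'"
    obtain l where l: "l \<in> L" "l \<noteq> 0" using LF[OF L(1)] left_submodule_nonzero_iff by blast
    then have "l \<in> SL L'" using L(3) subset_SL by blast
    then obtain a where a: "a \<in> A" "a * l \<in> L'" "a * l \<noteq> 0"
      using SL_nonzero_multiplier[OF ne LF(1)[OF L(2)] _ l(2)] by blast
    have "a * l \<in> L" using LF(1)[OF L(1)] a(1) l(1) by (rule left_submodule_mult)
    with indep_ideals_pair_Int[OF ind L(1,2,4)] a(2,3) show False by blast
  qed
  have indep: "\<forall>L\<in>G. x L = 0"
    if G: "finite G" "G \<subseteq> F" "\<forall>L\<in>G. x L \<in> SL L" "sum x G = 0" for G x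
  proof -
    have "\<And>M. M \<in> G \<Longrightarrow> left_submodule A M \<and> x M \<in> SL M" using G LF by blast
    from SL_common_multiplier[OF ne G(1) this finite_imageI[OF G(1), of x]]
    obtain a where a: "a \<in> A" "\<forall>L\<in>G. a * x L \<in> L"
      "\<forall>y\<in>x ` G. a * y \<in> A \<and> (y \<noteq> 0 \<longrightarrow> a * y \<noteq> 0)"
      by blast
    have "(\<Sum>L\<in>G. a * x L) = 0" using G(4) by (simp add: sum_distrib_left[symmetric])
    from indep_idealsD[OF ind G(1,2) a(2) this] have "\<forall>L\<in>G. a * x L = 0" .
    with a(3) show ?thesis by blast
  qed
  have "\<forall>L\<in>F. left_ideal UNIV (SL L) \<and> SL L \<noteq> {0}"
    using LF left_ideal_SL SL_nonzero by blast
  from indep_ideals_image[OF inj this indep] inj show ?thesis by blast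
qed

lemma indep_ideals_Int_subring_image:
  assumes ne: "nicely_essential_subring A" and ind: "indep_ideals UNIV F"
  shows "inj_on (\<lambda>M. A \<inter> M) F \<and> indep_ideals A ((\<lambda>M. A \<inter> M) ` F)"
proof -
  have LF: "left_submodule A L" "A \<inter> L \<noteq> {0}" if "L \<in> F" for L
    using ind that Int_subring_nonzero[OF ne]
    by (auto simp: indep_ideals_def left_ideal_def left_submodule_UNIV_imp_left_submodule)
  have inj: "inj_on (\<lambda>M. A \<inter> M) F"
  proof (rule inj_onI, rule ccontr)
    fix L L' assume L: "L \<in> F" "L' \<in> F" "A \<inter> L = A \<inter> L'" "L \<noteq> L'"
    have "0 \<in> A \<inter> L"
      using ne LF(1)[OF L(1)]
      by (simp add: left_submodule_zero nicely_essential_subring_def is_subring_def)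
    then obtain l where "l \<in> A \<inter> L" "l \<noteq> 0" using LF(2)[OF L(1)] by blast
    with indep_ideals_pair_Int[OF ind L(1,2,4)] L(3) show False by blast
  qed
  have indep: "\<forall>L\<in>G. x L = 0"
    if "finite G" "G \<subseteq> F" "\<forall>L\<in>G. x L \<in> A \<inter> L" "sum x G = 0" for G x
  proof -
    have "\<forall>L\<in>G. x L \<in> L" using that(3) by blast
    from indep_idealsD[OF ind that(1,2) this that(4)] show ?thesis .
  qed
  have "\<forall>L\<in>F. left_ideal A (A \<inter> L) \<and> A \<inter> L \<noteq> {0}"
    using LF ne by (simp add: left_ideal_Int_subring nicely_essential_subring_is_subring)
  from indep_ideals_image[OF inj this indep] inj show ?thesis by blast
qed

lemma udim_le_if_indep_image:
  assumes "\<And>F. indep_ideals B F \<Longrightarrow> \<exists>h. inj_on h F \<and> indep_ideals B' (h ` F)"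
    and "udim_le B' K"
  shows "udim_le B K"
  unfolding udim_le_def
proof (intro allI impI)
  fix F assume "indep_ideals B F"
  then obtain h where h: "inj_on h F" "indep_ideals B' (h ` F)" using assms(1) by blast
  obtain f where "inj_on f (h ` F)" "f ` h ` F \<subseteq> K"
    using assms(2) h(2) unfolding udim_le_def by blast
  with h(1) show "\<exists>f. inj_on f F \<and> f ` F \<subseteq> K"
    by (intro exI[of _ "f \<circ> h"]) (simp add: comp_inj_on image_comp)
qed

lemma udim_le_UNIV_iff_udim_le_subring:
  assumes ne: "nicely_essential_subring A"
  shows "udim_le UNIV K \<longleftrightarrow> udim_le A K"
proof
  assume "udim_le UNIV K"
  with indep_ideals_SL_image[OF ne] show "udim_le A K"
    by (blast intro: udim_le_if_indep_image)
next
  assume "udim_le A K"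
  with indep_ideals_Int_subring_image[OF ne] show "udim_le UNIV K"
    by (blast intro: udim_le_if_indep_image)
qed

theorem mainTheorem3:
  fixes A :: "'a::ring_1 set"
  assumes ne: "nicely_essential_subring A"
  shows
   "((\<forall>L L'. left_ideal A L \<and> left_ideal A L' \<and> L \<inter> L' = {0} \<longrightarrow> SL L \<inter> SL L' = {0})
     \<and> (\<forall>K. udim_le (UNIV::'a set) K \<longleftrightarrow> udim_le A K)
     \<and> sing A = A \<inter> sing (UNIV::'a set)
     \<and> (\<forall>E. finite E \<and> E \<subseteq> sing (UNIV::'a set) \<and> 0 \<notin> E \<longrightarrow>
           (\<exists>a\<in>A. \<forall>x\<in>E. a * x \<noteq> 0 \<and> a * x \<in> sing A)))
    \<and> (\<forall>L. left_submodule A L \<and> L \<noteq> {0} \<longrightarrow>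
          (uniform_in A (A \<inter> L) \<longleftrightarrow> uniform_in (UNIV::'a set) (SL L))
        \<and> (essential_in A (A \<inter> L) \<longleftrightarrow> essential_in (UNIV::'a set) (SL L)))"
proof (intro conjI allI impI)
  fix L L' :: "'a set" assume "left_ideal A L \<and> left_ideal A L' \<and> L \<inter> L' = {0}"
  then show "SL L \<inter> SL L' = {0}" using SL_Int_SL_eq_zero[OF ne] by blast
next
  fix K :: "'a set set"
  show "udim_le UNIV K \<longleftrightarrow> udim_le A K" by (rule udim_le_UNIV_iff_udim_le_subring[OF ne])
next
  show "sing A = A \<inter> sing UNIV" by (rule sing_Int_subring[OF ne])
next
  fix E :: "'a set" assume "finite E \<and> E \<subseteq> sing UNIV \<and> 0 \<notin> E"
  then show "\<exists>a\<in>A. \<forall>x\<in>E. a * x \<noteq> 0 \<and> a * x \<in> sing A"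
    using sing_Int_subring_multiplier[OF ne] by blast
next
  fix L :: "'a set" assume "left_submodule A L \<and> L \<noteq> {0}"
  then show "uniform_in A (A \<inter> L) \<longleftrightarrow> uniform_in UNIV (SL L)"
    "essential_in A (A \<inter> L) \<longleftrightarrow> essential_in UNIV (SL L)"
    using uniform_in_Int_subring_iff_uniform_SL[OF ne] essential_in_Int_subring_iff_essential_SL[OF ne]
    by blast+
qed

end
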